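(* Let $N\ge 1$ and let $D_1^N,\ldots,D_N^N:\mathbb{R}_+^N\to\mathbb{R}$ be demand functions satisfying assumptions (A1) and (A2) below. Fix a price vector $p=(p_1,\ldots,p_N)\in\mathbb{R}_+^N$ with $p_1\le p_2\le\cdots\le p_N$. Then $$D_1^N(p_1,\ldots,p_N)\ \ge\ D_2^N(p_1,\ldots,p_N)\ \ge\ \cdots\ \ge\ D_N^N(p_1,\ldots,p_N).$$
   Context: (A1) Each $D_i^N$ is smooth in all variables, $D_N^N(0,\ldots,0)>0$, $\partial D_i^N/\partial p_i<0$, and $\partial D_i^N/\partial p_j>0$ for $j\neq i$. (A2) Exchangeability: for all $i,j\in\{1,\ldots,N\}$ and all $p$, $D_i^N(p_1,\ldots,p_i,\ldots,p_j,\ldots,p_N)=D_j^N(p_1,\ldots,p_j,\ldots,p_i,\ldots,p_N)$ (the right-hand side has the $i$-th and $j$-th prices swapped); consequently $D_i^N$ is invariant under permutations of the prices $p_k$, $k\ne i$. *)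

theory Defs
  imports "HOL-Analysis.Analysis"
begin

text \<open>Prices are vectors in real^'n, where the index type 'n is a finite linear
order (standing for {1..N}, N = CARD('n) \<ge> 1).\<close>

definition nonneg_orthant :: "(real ^ 'n) set" where
  "nonneg_orthant = {p. \<forall>k. 0 \<le> p $ k}"

definition partial :: "'n \<Rightarrow> (real ^ 'n \<Rightarrow> real) \<Rightarrow> real ^ 'n \<Rightarrow> real" where
  "partial j f p = deriv (\<lambda>t. f (p + t *\<^sub>R axis j 1)) 0"

definition has_partial :: "'n \<Rightarrow> (real ^ 'n \<Rightarrow> real) \<Rightarrow> real ^ 'n \<Rightarrow> bool" where
  "has_partial j f p \<longleftrightarrow> (\<lambda>t. f (p + t *\<^sub>R axis j 1)) differentiable (at 0)"

fun iter_partial :: "'n list \<Rightarrow> (real ^ 'n \<Rightarrow> real) \<Rightarrow> real ^ 'n \<Rightarrow> real" where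
  "iter_partial [] f = f"
| "iter_partial (j # js) f = partial j (iter_partial js f)"

definition smooth_on_open :: "(real ^ 'n) set \<Rightarrow> (real ^ 'n \<Rightarrow> real) \<Rightarrow> bool" where
  "smooth_on_open U f \<longleftrightarrow> open U \<and>
     (\<forall>js. continuous_on U (iter_partial js f) \<and>
           (\<forall>j. \<forall>p\<in>U. has_partial j (iter_partial js f) p))"

definition swap_prices :: "'n \<Rightarrow> 'n \<Rightarrow> real ^ 'n \<Rightarrow> real ^ 'n" where
  "swap_prices i j p = (\<chi> k. if k = i then p $ j else if k = j then p $ i else p $ k)"

end

theory Submission
  imports Defs
begin

text \<open>By exchangeability, \<open>D\<^sub>j(p) = D\<^sub>i(q)\<close>, where \<open>q\<close> is \<open>p\<close> with the prices \<open>p\<^sub>i \<le> p\<^sub>j\<close>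
  exchanged. Passing from \<open>p\<close> to \<open>q\<close> inside the orthant, first raise the own price \<open>p\<^sub>i\<close> to \<open>p\<^sub>j\<close>
  and then lower the rival price \<open>p\<^sub>j\<close> to \<open>p\<^sub>i\<close>; by the sign conditions of (A1) neither move
  increases \<open>D\<^sub>i\<close>, so \<open>D\<^sub>j(p) = D\<^sub>i(q) \<le> D\<^sub>i(p)\<close>.\<close>

lemma smooth_on_open_has_partial:
  assumes "smooth_on_open U f" and "p \<in> U"
  shows "has_partial j f p"
  using assms iter_partial.simps(1) unfolding smooth_on_open_def by metis

lemma has_partial_imp_has_real_derivative_along_axis:
  fixes f :: "real ^ 'n \<Rightarrow> real"
  assumes "has_partial k f (x + t *\<^sub>R axis k 1)"
  shows "((\<lambda>s. f (x + s *\<^sub>R axis k 1)) has_real_derivative partial k f (x + t *\<^sub>R axis k 1)) (at t)"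
proof -
  let ?y = "x + t *\<^sub>R axis k 1"
  have "((\<lambda>s. f (?y + s *\<^sub>R axis k 1)) has_real_derivative partial k f ?y) (at 0)"
    using assms unfolding has_partial_def partial_def
    by (simp add: DERIV_deriv_iff_real_differentiable)
  moreover have "(\<lambda>s. f (?y + s *\<^sub>R axis k 1)) = (\<lambda>s. f (x + (s + t) *\<^sub>R axis k 1))"
    by (simp add: algebra_simps scaleR_add_left)
  ultimately show ?thesis
    using DERIV_shift[of "\<lambda>s. f (x + s *\<^sub>R axis k 1)" "partial k f ?y" 0 t] by simp
qed

lemma mono_along_axis_if_partial_nonneg:
  fixes f :: "real ^ 'n \<Rightarrow> real"
  assumes "a \<le> b"
    and "\<And>t. a \<le> t \<Longrightarrow> t \<le> b \<Longrightarrow> has_partial k f (x + t *\<^sub>R axis k 1)"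
    and "\<And>t. a \<le> t \<Longrightarrow> t \<le> b \<Longrightarrow> partial k f (x + t *\<^sub>R axis k 1) \<ge> 0"
  shows "f (x + a *\<^sub>R axis k 1) \<le> f (x + b *\<^sub>R axis k 1)"
  using assms(1)
proof (rule DERIV_nonneg_imp_nondecreasing)
  fix t assume "a \<le> t" "t \<le> b"
  then show "\<exists>y. ((\<lambda>s. f (x + s *\<^sub>R axis k 1)) has_real_derivative y) (at t) \<and> y \<ge> 0"
    using has_partial_imp_has_real_derivative_along_axis assms(2,3) by blast
qed

lemma antimono_along_axis_if_partial_nonpos:
  fixes f :: "real ^ 'n \<Rightarrow> real"
  assumes "a \<le> b"
    and "\<And>t. a \<le> t \<Longrightarrow> t \<le> b \<Longrightarrow> has_partial k f (x + t *\<^sub>R axis k 1)"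
    and "\<And>t. a \<le> t \<Longrightarrow> t \<le> b \<Longrightarrow> partial k f (x + t *\<^sub>R axis k 1) \<le> 0"
  shows "f (x + b *\<^sub>R axis k 1) \<le> f (x + a *\<^sub>R axis k 1)"
  using assms(1)
proof (rule DERIV_nonpos_imp_nonincreasing)
  fix t assume "a \<le> t" "t \<le> b"
  then show "\<exists>y. ((\<lambda>s. f (x + s *\<^sub>R axis k 1)) has_real_derivative y) (at t) \<and> y \<le> 0"
    using has_partial_imp_has_real_derivative_along_axis assms(2,3) by blast
qed

lemma swap_prices_eq_axis_shifts:
  assumes "i \<noteq> j"
  shows "swap_prices j i p
    = (p + (p $ j - p $ i) *\<^sub>R axis i 1) + (- (p $ j - p $ i)) *\<^sub>R axis j 1"
  using assms by (simp add: swap_prices_def vec_eq_iff axis_def)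

lemma swap_prices_le_if_own_partial_nonpos_cross_partial_nonneg:
  fixes f :: "real ^ 'n \<Rightarrow> real"
  assumes "i \<noteq> j" and p: "p \<in> nonneg_orthant" and "p $ i \<le> p $ j"
    and diff: "\<And>k q. q \<in> nonneg_orthant \<Longrightarrow> has_partial k f q"
    and own: "\<And>q. q \<in> nonneg_orthant \<Longrightarrow> partial i f q \<le> 0"
    and cross: "\<And>q. q \<in> nonneg_orthant \<Longrightarrow> partial j f q \<ge> 0"
  shows "f (swap_prices j i p) \<le> f p"
proof -
  define d where "d = p $ j - p $ i"
  define p' where "p' = p + d *\<^sub>R axis i 1"
  have "d \<ge> 0" using \<open>p $ i \<le> p $ j\<close> by (simp add: d_def)
  have p_coord: "0 \<le> p $ k" for k using p by (simp add: nonneg_orthant_def)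
  have raise_own: "p + t *\<^sub>R axis i 1 \<in> nonneg_orthant" if "0 \<le> t" for t
    using p_coord that by (simp add: nonneg_orthant_def axis_def)
  have lower_rival: "p' + t *\<^sub>R axis j 1 \<in> nonneg_orthant" if "- d \<le> t" for t
  proof -
    have "0 \<le> p $ j + t" using p_coord[of i] that by (simp add: d_def)
    then show ?thesis
      using p_coord \<open>d \<ge> 0\<close> \<open>i \<noteq> j\<close> by (auto simp: nonneg_orthant_def axis_def p'_def)
  qed
  have "f (swap_prices j i p) = f (p' + (- d) *\<^sub>R axis j 1)"
    unfolding p'_def d_def using swap_prices_eq_axis_shifts[OF \<open>i \<noteq> j\<close>] by metis
  also have "\<dots> \<le> f (p' + 0 *\<^sub>R axis j 1)"
    using \<open>d \<ge> 0\<close> by (intro mono_along_axis_if_partial_nonneg) (simp_all add: diff cross lower_rival)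
  also have "\<dots> = f (p + d *\<^sub>R axis i 1)" by (simp add: p'_def)
  also have "\<dots> \<le> f (p + 0 *\<^sub>R axis i 1)"
    using \<open>d \<ge> 0\<close> by (intro antimono_along_axis_if_partial_nonpos) (simp_all add: diff own raise_own)
  also have "\<dots> = f p" by simp
  finally show ?thesis .
qed

theorem proposition2p1:
  fixes D :: "'n::{finite,linorder} \<Rightarrow> real ^ 'n::{finite,linorder} \<Rightarrow> real"
    and p :: "real ^ 'n::{finite,linorder}"
  assumes A1: "\<exists>U G. nonneg_orthant \<subseteq> U \<and> (\<forall>i. smooth_on_open U (G i))
      \<and> (\<forall>i. \<forall>q\<in>nonneg_orthant. G i q = D i q)
      \<and> (\<forall>i. \<forall>q\<in>nonneg_orthant. partial i (G i) q < 0)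
      \<and> (\<forall>i j. j \<noteq> i \<longrightarrow> (\<forall>q\<in>nonneg_orthant. partial j (G i) q > 0))"
    and A1_pos: "D (GREATEST i. True) 0 > 0"
    and A2: "\<And>i j q. q \<in> nonneg_orthant \<Longrightarrow> D i q = D j (swap_prices i j q)"
    and p_nonneg: "p \<in> nonneg_orthant"
    and p_sorted: "\<And>i j. i \<le> j \<Longrightarrow> p $ i \<le> p $ j"
  shows "\<And>i j. i \<le> j \<Longrightarrow> D i p \<ge> D j p"
proof -
  fix i j :: 'n
  assume "i \<le> j"
  obtain U G where "nonneg_orthant \<subseteq> U" and smooth: "\<forall>i. smooth_on_open U (G i)"
    and GD: "\<forall>i. \<forall>q\<in>nonneg_orthant. G i q = D i q"
    and own: "\<forall>i. \<forall>q\<in>nonneg_orthant. partial i (G i) q < 0"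
    and cross: "\<forall>i j. j \<noteq> i \<longrightarrow> (\<forall>q\<in>nonneg_orthant. partial j (G i) q > 0)"
    using A1 by (elim exE conjE)
  show "D i p \<ge> D j p"
  proof (cases "i = j")
    case False
    let ?q = "swap_prices j i p"
    have diff: "has_partial k (G i) q" if "q \<in> nonneg_orthant" for k q
      using smooth_on_open_has_partial smooth that \<open>nonneg_orthant \<subseteq> U\<close> by blast
    have "G i ?q \<le> G i p"
      using False p_nonneg p_sorted[OF \<open>i \<le> j\<close>] diff
    proof (rule swap_prices_le_if_own_partial_nonpos_cross_partial_nonneg)
      show "partial i (G i) q \<le> 0" if "q \<in> nonneg_orthant" for q
        using own that by (simp add: less_imp_le)
      show "partial j (G i) q \<ge> 0" if "q \<in> nonneg_orthant" for q
        using cross False that by (simp add: less_imp_le)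
    qed
    moreover have "?q \<in> nonneg_orthant"
      using p_nonneg by (simp add: nonneg_orthant_def swap_prices_def)
    ultimately show ?thesis
      using A2[OF p_nonneg, of j i] GD p_nonneg by simp
  qed simp
qed

end
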